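(* In the setting described in the context, assume $\mathrm{gap}(U)>0$. Then for every $k\in\mathbb N$, \[ \mathrm{gap}(H^{(k)})\ge \mathrm{gap}(U)-\beta_k . \]
   Context: Let $K\subseteq\mathbb R^d$ be Borel and $\rho:K\to[0,\infty)$ measurable with $0<\int_K\rho\,\mathrm dx<\infty$; $\pi(A)=\int_A\rho\,\mathrm dx/\int_K\rho\,\mathrm dx$. For $t\ge0$, $K(t)=\{x\in K:\rho(x)\ge t\}$, assume $0<\mathrm{vol}_d(K(t))<\infty$ for $t\in(0,\|\rho\|_\infty)$, and $U_t$ is the uniform distribution on $K(t)$. For each $t$, $H_t$ is a Markov kernel on $K(t)$ (extended by $0$ outside $K(t)$, measurable in $(t,x)$), reversible with respect to $U_t$. $L_{2,\pi}=L_2(K,\pi)$, $L_{2,t}=L_2(K(t),U_t)$; $H_t$ acts on $L_{2,t}$ by $H_tf(x)=\int f(y)H_t(x,\mathrm dy)$ and $U_t$ acts by $f\mapsto U_t(f)=\int f\,\mathrm dU_t$. For $k\in\mathbb N$ let $H^{(k)}f(x)=\frac1{\rho(x)}\int_0^{\rho(x)}H_t^kf(x)\,\mathrm dt$ and $Uf(x)=\frac1{\rho(x)}\int_0^{\rho(x)}U_t(f)\,\mathrm dt$ (simple slice sampler). $S(f)=\int_Kf\,\mathrm d\pi$ as an operator onto constants, and for an operator $P$ on $L_{2,\pi}$, $\mathrm{gap}(P)=1-\|P-S\|_{L_{2,\pi}\to L_{2,\pi}}$. Finally $\beta_k=\sup_{x\in K}\big(\int_0^{\rho(x)}\|H_t^k-U_t\|^2_{L_{2,t}\to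 L_{2,t}}\,\mathrm dt/\rho(x)\big)^{1/2}$. *)

theory Defs
  imports "HOL-Probability.Probability"
begin

definition L2fun :: "'a measure \<Rightarrow> ('a \<Rightarrow> real) \<Rightarrow> bool" where
  "L2fun M f \<longleftrightarrow> f \<in> borel_measurable M \<and> (\<integral>\<^sup>+x. ennreal ((f x)\<^sup>2) \<partial>M) < \<infinity>"

definition op_norm_L2 :: "'a measure \<Rightarrow> (('a \<Rightarrow> real) \<Rightarrow> ('a \<Rightarrow> real)) \<Rightarrow> real" where
  "op_norm_L2 M P = Inf {c. 0 \<le> c \<and> (\<forall>f. L2fun M f \<longrightarrow>
      (\<integral>\<^sup>+x. ennreal ((P f x)\<^sup>2) \<partial>M) \<le> ennreal (c\<^sup>2) * (\<integral>\<^sup>+x. ennreal ((f x)\<^sup>2) \<partial>M))}"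

definition level_set :: "'a set \<Rightarrow> ('a \<Rightarrow> real) \<Rightarrow> real \<Rightarrow> 'a set" where
  "level_set K \<rho> t = {x \<in> K. t \<le> \<rho> x}"

definition unif_level :: "'a::euclidean_space set \<Rightarrow> ('a \<Rightarrow> real) \<Rightarrow> real \<Rightarrow> 'a measure" where
  "unif_level K \<rho> t = uniform_measure lborel (level_set K \<rho> t)"

definition target :: "'a::euclidean_space set \<Rightarrow> ('a \<Rightarrow> real) \<Rightarrow> 'a measure" where
  "target K \<rho> = density lborel
     (\<lambda>x. ennreal (indicator K x * \<rho> x / (\<integral>y. indicator K y * \<rho> y \<partial>lborel)))"

definition kernel_op :: "('a \<Rightarrow> 'a measure) \<Rightarrow> ('a \<Rightarrow> real) \<Rightarrow> 'a \<Rightarrow> real" where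
  "kernel_op P f x = (\<integral>y. f y \<partial>(P x))"

definition kernel_pow :: "(real \<Rightarrow> 'a \<Rightarrow> 'a measure) \<Rightarrow> real \<Rightarrow> nat \<Rightarrow> ('a \<Rightarrow> real) \<Rightarrow> 'a \<Rightarrow> real" where
  "kernel_pow H t k = kernel_op (H t) ^^ k"

definition hybrid_op :: "('a \<Rightarrow> real) \<Rightarrow> (real \<Rightarrow> 'a \<Rightarrow> 'a measure) \<Rightarrow> nat \<Rightarrow> ('a \<Rightarrow> real) \<Rightarrow> 'a \<Rightarrow> real" where
  "hybrid_op \<rho> H k f x = (1 / \<rho> x) * set_lebesgue_integral lborel {0..\<rho> x} (\<lambda>t. kernel_pow H t k f x)"

definition slice_op :: "'a::euclidean_space set \<Rightarrow> ('a \<Rightarrow> real) \<Rightarrow> ('a \<Rightarrow> real) \<Rightarrow> 'a \<Rightarrow> real" where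
  "slice_op K \<rho> f x = (1 / \<rho> x) * set_lebesgue_integral lborel {0..\<rho> x} (\<lambda>t. \<integral>y. f y \<partial>(unif_level K \<rho> t))"

definition gap :: "'a measure \<Rightarrow> (('a \<Rightarrow> real) \<Rightarrow> ('a \<Rightarrow> real)) \<Rightarrow> real" where
  "gap M P = 1 - op_norm_L2 M (\<lambda>f x. P f x - (\<integral>y. f y \<partial>M))"

definition beta :: "'a::euclidean_space set \<Rightarrow> ('a \<Rightarrow> real) \<Rightarrow> (real \<Rightarrow> 'a \<Rightarrow> 'a measure) \<Rightarrow> nat \<Rightarrow> real" where
  "beta K \<rho> H k = Sup ((\<lambda>x. sqrt (enn2real (\<integral>\<^sup>+t\<in>{0..\<rho> x}.
       ennreal ((op_norm_L2 (unif_level K \<rho> t)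
          (\<lambda>f y. kernel_pow H t k f y - (\<integral>z. f z \<partial>(unif_level K \<rho> t))))\<^sup>2) \<partial>lborel) / \<rho> x)) ` K)"

end

theory Submission
  imports Defs
begin

text \<open>Write \<open>S\<close> for the projection onto constants. Since \<open>H\<^sup>(\<^sup>k\<^sup>) - S = (H\<^sup>(\<^sup>k\<^sup>) - U) + (U - S)\<close>, it suffices
  to show \<open>\<parallel>H\<^sup>(\<^sup>k\<^sup>) - U\<parallel> \<le> \<beta>\<^sub>k\<close> in \<open>L\<^sub>2(\<pi>)\<close>. Now \<open>(H\<^sup>(\<^sup>k\<^sup>) - U) f (x)\<close> is the average over \<open>t \<in> [0, \<rho> x]\<close> of
  \<open>(H\<^sub>t\<^sup>k - U\<^sub>t) f (x)\<close>. The Cauchy--Schwarz inequality on \<open>[0, \<rho> x]\<close> with a weight \<open>w(t) \<approx> \<parallel>H\<^sub>t\<^sup>k - U\<^sub>t\<parallel>\<close>,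
  followed by the layer-cake formula
  \<open>\<integral>\<^sub>K \<integral>\<^sub>0\<^sup>\<rho>\<^sup>(\<^sup>x\<^sup>) g(t, x) dt dx = \<integral>\<^sub>0\<^sup>\<infinity> vol(K(t)) \<integral> g(t, -) dU\<^sub>t dt\<close>,
  bounds \<open>\<integral>\<^sub>K \<rho> ((H\<^sup>(\<^sup>k\<^sup>) - U) f)\<^sup>2\<close> by \<open>\<beta>\<^sub>k\<^sup>2 \<integral>\<^sub>0\<^sup>\<infinity> vol(K(t)) \<parallel>f\<parallel>\<^sup>2\<^sub>U\<^sub>t dt = \<beta>\<^sub>k\<^sup>2 \<integral>\<^sub>K \<rho> f\<^sup>2\<close>.\<close>

abbreviation sqnorm :: "'a measure \<Rightarrow> ('a \<Rightarrow> real) \<Rightarrow> ennreal" where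
  "sqnorm M h \<equiv> \<integral>\<^sup>+ x. ennreal ((h x)\<^sup>2) \<partial>M"

lemma measurable_kernel_integral:
  fixes f :: "'a \<Rightarrow> 'b \<Rightarrow> real"
  assumes f[measurable]: "(\<lambda>(x, y). f x y) \<in> borel_measurable (M \<Otimes>\<^sub>M N)"
    and L[measurable]: "L \<in> M \<rightarrow>\<^sub>M subprob_algebra N"
  shows "(\<lambda>x. integral\<^sup>L (L x) (f x)) \<in> borel_measurable M"
proof -
  note integral_measurable_subprob_algebra[measurable] measurable_distr2[measurable]
  have "(\<lambda>x. integral\<^sup>L (distr (L x) (M \<Otimes>\<^sub>M N) (\<lambda>y. (x, y))) (\<lambda>(x, y). f x y)) \<in> borel_measurable M"
    by measurable
  then show ?thesis
    by (rule measurable_cong[THEN iffD1, rotated])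
      (simp add: integral_distr measurable_cong_sets[OF sets_kernel[OF L] refl])
qed

lemma abs_integral_le_nn_integral:
  fixes g :: "'a \<Rightarrow> real"
  shows "ennreal \<bar>integral\<^sup>L M g\<bar> \<le> (\<integral>\<^sup>+ y. ennreal \<bar>g y\<bar> \<partial>M)"
proof (cases "integrable M g")
  case True
  then show ?thesis using integral_norm_bound_ennreal[OF True] by simp
qed (simp add: not_integrable_integral_eq)

lemma abs_set_integral_le_nn_integral:
  fixes g :: "'a \<Rightarrow> real"
  shows "ennreal \<bar>set_lebesgue_integral M A g\<bar> \<le> (\<integral>\<^sup>+ t\<in>A. ennreal \<bar>g t\<bar> \<partial>M)"
proof -
  have "ennreal \<bar>set_lebesgue_integral M A g\<bar> \<le> (\<integral>\<^sup>+ t. ennreal \<bar>indicator A t *\<^sub>R g t\<bar> \<partial>M)"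
    unfolding set_lebesgue_integral_def by (rule abs_integral_le_nn_integral)
  also have "\<dots> = (\<integral>\<^sup>+ t\<in>A. ennreal \<bar>g t\<bar> \<partial>M)"
    by (intro nn_integral_cong) (auto split: split_indicator)
  finally show ?thesis .
qed

text \<open>This holds also when \<open>h\<close> is not integrable on \<open>A\<close>: then neither is \<open>g + h\<close>, and both
  integrals are \<open>0\<close>.\<close>

lemma abs_set_integral_add_diff_le:
  fixes g h :: "'a \<Rightarrow> real"
  assumes [measurable]: "g \<in> borel_measurable M" "A \<in> sets M"
  shows "ennreal \<bar>set_lebesgue_integral M A (\<lambda>t. g t + h t) - set_lebesgue_integral M A h\<bar>
    \<le> (\<integral>\<^sup>+ t\<in>A. ennreal \<bar>g t\<bar> \<partial>M)"
proof (cases "(\<integral>\<^sup>+ t\<in>A. ennreal \<bar>g t\<bar> \<partial>M) < \<infinity>")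
  case True
  have "(\<integral>\<^sup>+ t. ennreal (norm (indicator A t *\<^sub>R g t)) \<partial>M) = (\<integral>\<^sup>+ t\<in>A. ennreal \<bar>g t\<bar> \<partial>M)"
    by (intro nn_integral_cong) (auto split: split_indicator)
  with True have g: "set_integrable M A g"
    unfolding set_integrable_def by (intro integrableI_bounded) auto
  show ?thesis
  proof (cases "set_integrable M A h")
    case True
    then show ?thesis
      using abs_set_integral_le_nn_integral[of M A g] by (simp add: set_integral_add(2)[OF g True])
  next
    case False
    with g have "\<not> set_integrable M A (\<lambda>t. g t + h t)"
      using set_integral_diff(1)[of M A "\<lambda>t. g t + h t" g] by auto
    with False show ?thesis
      by (simp add: set_integrable_def set_lebesgue_integral_def not_integrable_integral_eq)
  qed
next
  case False
  then show ?thesis by (simp add: less_top[symmetric])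
qed

lemma square_integral_le_subprob:
  fixes g :: "'a \<Rightarrow> real"
  assumes M: "subprob_space M" and [measurable]: "g \<in> borel_measurable M"
  shows "ennreal ((integral\<^sup>L M g)\<^sup>2) \<le> sqnorm M g"
proof -
  have "ennreal ((integral\<^sup>L M g)\<^sup>2) = (ennreal \<bar>integral\<^sup>L M g\<bar>)\<^sup>2"
    by (simp add: ennreal_power)
  also have "\<dots> \<le> (\<integral>\<^sup>+ y. ennreal \<bar>g y\<bar> \<partial>M)\<^sup>2"
    by (intro power_mono abs_integral_le_nn_integral) auto
  also have "\<dots> = (\<integral>\<^sup>+ y. ennreal \<bar>g y\<bar> * 1 \<partial>M)\<^sup>2"
    by simp
  also have "\<dots> \<le> (\<integral>\<^sup>+ y. (ennreal \<bar>g y\<bar>)\<^sup>2 \<partial>M) * (\<integral>\<^sup>+ y. 1\<^sup>2 \<partial>M)"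
    by (rule Cauchy_Schwarz_nn_integral) auto
  also have "\<dots> = sqnorm M g * emeasure M (space M)"
    by (simp add: ennreal_power)
  also have "\<dots> \<le> sqnorm M g * 1"
    by (intro mult_left_mono subprob_space.emeasure_space_le_1[OF M]) auto
  finally show ?thesis by simp
qed

lemma sqnorm_mean_le_subprob:
  fixes g :: "'a \<Rightarrow> real"
  assumes M: "subprob_space M" and "g \<in> borel_measurable M"
  shows "sqnorm M (\<lambda>_. integral\<^sup>L M g) \<le> sqnorm M g"
proof -
  have "sqnorm M (\<lambda>_. integral\<^sup>L M g) = ennreal ((integral\<^sup>L M g)\<^sup>2) * emeasure M (space M)"
    by simp
  also have "\<dots> \<le> ennreal ((integral\<^sup>L M g)\<^sup>2) * 1"
    by (intro mult_left_mono subprob_space.emeasure_space_le_1[OF M]) auto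
  also have "\<dots> \<le> sqnorm M g"
    using square_integral_le_subprob[OF assms] by simp
  finally show ?thesis .
qed

lemma sqnorm_diff_le:
  fixes a b :: "'a \<Rightarrow> real"
  assumes [measurable]: "a \<in> borel_measurable M" "b \<in> borel_measurable M"
  shows "sqnorm M (\<lambda>y. a y - b y) \<le> 2 * sqnorm M a + 2 * sqnorm M b"
proof -
  have "sqnorm M (\<lambda>y. a y - b y) \<le> (\<integral>\<^sup>+ y. 2 * ennreal ((a y)\<^sup>2) + 2 * ennreal ((b y)\<^sup>2) \<partial>M)"
  proof (rule nn_integral_mono)
    fix y
    have "(a y - b y)\<^sup>2 \<le> 2 * (a y)\<^sup>2 + 2 * (b y)\<^sup>2"
      by (smt (verit) sum_squares_ge_zero power2_diff power2_sum zero_le_power2)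
    then have "ennreal ((a y - b y)\<^sup>2) \<le> ennreal (2 * (a y)\<^sup>2 + 2 * (b y)\<^sup>2)"
      by (rule ennreal_leI)
    then show "ennreal ((a y - b y)\<^sup>2) \<le> 2 * ennreal ((a y)\<^sup>2) + 2 * ennreal ((b y)\<^sup>2)"
      by (simp add: ennreal_plus ennreal_mult)
  qed
  also have "\<dots> = 2 * sqnorm M a + 2 * sqnorm M b"
    by (simp add: nn_integral_add nn_integral_cmult)
  finally show ?thesis .
qed

lemma square_add_le_weighted:
  fixes a b s :: real
  assumes s: "0 < s"
  shows "(a + b)\<^sup>2 \<le> (1 + s) * a\<^sup>2 + (1 + 1 / s) * b\<^sup>2"
proof -
  have "(1 + s) * a\<^sup>2 + (1 + 1 / s) * b\<^sup>2 - (a + b)\<^sup>2 = (s * a - b)\<^sup>2 / s"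
    using s by (simp add: field_simps power2_eq_square)
  also have "\<dots> \<ge> 0" using s by simp
  finally show ?thesis by simp
qed

lemma ennreal_mult_square_div_le:
  fixes r s :: real
  assumes r: "0 \<le> r" and A: "ennreal \<bar>s\<bar> \<le> A"
  shows "ennreal (r * (s / r)\<^sup>2) \<le> A\<^sup>2 / ennreal r"
proof (cases "r = 0")
  case False
  then have "ennreal (r * (s / r)\<^sup>2) = ennreal (\<bar>s\<bar>\<^sup>2) / ennreal r"
    using r by (simp add: divide_ennreal power2_eq_square)
  also have "\<dots> = (ennreal \<bar>s\<bar>)\<^sup>2 / ennreal r"
    by (simp add: ennreal_power)
  also have "\<dots> \<le> A\<^sup>2 / ennreal r"
    by (intro divide_right_mono_ennreal power_mono A) simp
  finally show ?thesis .
qed simp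

lemma nn_integral_weighted_Cauchy_Schwarz:
  fixes g w :: "'a \<Rightarrow> real"
  assumes [measurable]: "g \<in> borel_measurable M" "w \<in> borel_measurable M" "A \<in> sets M"
    and w: "\<And>t. 0 < w t"
  shows "(\<integral>\<^sup>+ t\<in>A. ennreal \<bar>g t\<bar> \<partial>M)\<^sup>2
    \<le> (\<integral>\<^sup>+ t\<in>A. ennreal ((w t)\<^sup>2) \<partial>M) * (\<integral>\<^sup>+ t\<in>A. ennreal ((g t)\<^sup>2 / (w t)\<^sup>2) \<partial>M)"
proof -
  have "ennreal \<bar>g t\<bar> * indicator A t
      = (ennreal (w t) * indicator A t) * (ennreal (\<bar>g t\<bar> / w t) * indicator A t)" for t
    using w[of t] by (auto simp: ennreal_mult[symmetric] split: split_indicator)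
  then have "(\<integral>\<^sup>+ t\<in>A. ennreal \<bar>g t\<bar> \<partial>M)
      = (\<integral>\<^sup>+ t. (ennreal (w t) * indicator A t) * (ennreal (\<bar>g t\<bar> / w t) * indicator A t) \<partial>M)"
    by simp
  also have "(\<dots>)\<^sup>2 \<le> (\<integral>\<^sup>+ t. (ennreal (w t) * indicator A t)\<^sup>2 \<partial>M)
      * (\<integral>\<^sup>+ t. (ennreal (\<bar>g t\<bar> / w t) * indicator A t)\<^sup>2 \<partial>M)"
    by (rule Cauchy_Schwarz_nn_integral) auto
  also have "\<dots> = (\<integral>\<^sup>+ t\<in>A. ennreal ((w t)\<^sup>2) \<partial>M) * (\<integral>\<^sup>+ t\<in>A. ennreal ((g t)\<^sup>2 / (w t)\<^sup>2) \<partial>M)"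
  proof (intro arg_cong2[where f="(*)"] nn_integral_cong)
    fix t
    have "(ennreal (\<bar>g t\<bar> / w t))\<^sup>2 = ennreal ((g t)\<^sup>2 / (w t)\<^sup>2)"
      using w[of t] by (simp add: ennreal_power power_divide)
    then show "(ennreal (\<bar>g t\<bar> / w t) * indicator A t)\<^sup>2 = ennreal ((g t)\<^sup>2 / (w t)\<^sup>2) * indicator A t"
      by (auto simp: power_mult_distrib split: split_indicator)
  qed (use w in \<open>auto simp: power_mult_distrib ennreal_power less_imp_le split: split_indicator\<close>)
  finally show ?thesis .
qed

definition L2_bounds :: "'a measure \<Rightarrow> (('a \<Rightarrow> real) \<Rightarrow> ('a \<Rightarrow> real)) \<Rightarrow> real set" where
  "L2_bounds M P = {c. 0 \<le> c \<and> (\<forall>f. L2fun M f \<longrightarrow> sqnorm M (P f) \<le> ennreal (c\<^sup>2) * sqnorm M f)}"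

lemma op_norm_L2_eq_Inf: "op_norm_L2 M P = Inf (L2_bounds M P)"
  unfolding op_norm_L2_def L2_bounds_def ..

lemma L2_boundsI:
  "0 \<le> c \<Longrightarrow> (\<And>f. L2fun M f \<Longrightarrow> sqnorm M (P f) \<le> ennreal (c\<^sup>2) * sqnorm M f) \<Longrightarrow> c \<in> L2_bounds M P"
  unfolding L2_bounds_def by auto

lemma L2_boundsD:
  "c \<in> L2_bounds M P \<Longrightarrow> L2fun M f \<Longrightarrow> sqnorm M (P f) \<le> ennreal (c\<^sup>2) * sqnorm M f"
  unfolding L2_bounds_def by auto

lemma L2_bounds_nonneg: "c \<in> L2_bounds M P \<Longrightarrow> 0 \<le> c"
  unfolding L2_bounds_def by auto

lemma bdd_below_L2_bounds: "bdd_below (L2_bounds M P)"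
  by (intro bdd_belowI[of _ 0]) (auto simp: L2_bounds_def)

lemma op_norm_L2_nonneg: "c \<in> L2_bounds M P \<Longrightarrow> 0 \<le> op_norm_L2 M P"
  unfolding op_norm_L2_eq_Inf by (intro cInf_greatest) (auto simp: L2_bounds_def)

lemma op_norm_L2_le_bound: "c \<in> L2_bounds M P \<Longrightarrow> op_norm_L2 M P \<le> c"
  unfolding op_norm_L2_eq_Inf by (intro cInf_lower bdd_below_L2_bounds)

lemma L2_bounds_mono:
  assumes c: "c \<in> L2_bounds M P" and "c \<le> d"
  shows "d \<in> L2_bounds M P"
proof (rule L2_boundsI)
  show "0 \<le> d" using assms L2_bounds_nonneg by fastforce
  fix f assume "L2fun M f"
  with c have "sqnorm M (P f) \<le> ennreal (c\<^sup>2) * sqnorm M f" by (rule L2_boundsD)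
  also have "\<dots> \<le> ennreal (d\<^sup>2) * sqnorm M f"
    using assms L2_bounds_nonneg[OF c] by (intro mult_right_mono ennreal_leI power_mono) auto
  finally show "sqnorm M (P f) \<le> ennreal (d\<^sup>2) * sqnorm M f" .
qed

lemma L2_bounds_gt_op_norm:
  assumes "c \<in> L2_bounds M P" and "op_norm_L2 M P < d"
  shows "d \<in> L2_bounds M P"
proof -
  obtain c' where "c' \<in> L2_bounds M P" "c' < d"
    using assms unfolding op_norm_L2_eq_Inf
    by (subst (asm) cInf_less_iff) (auto intro: bdd_below_L2_bounds)
  then show ?thesis by (auto intro: L2_bounds_mono)
qed

lemma op_norm_L2_le:
  assumes "\<And>c. b < c \<Longrightarrow> c \<in> L2_bounds M P" and "0 \<le> b"
  shows "op_norm_L2 M P \<le> b"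
proof (rule field_le_epsilon)
  fix e :: real assume "0 < e"
  with assms show "op_norm_L2 M P \<le> b + e" by (intro op_norm_L2_le_bound) auto
qed

lemma real_le_square_mult_limit:
  fixes a q n :: real
  assumes le: "\<And>c. n < c \<Longrightarrow> a \<le> c\<^sup>2 * q" and "0 \<le> n" "0 \<le> q"
  shows "a \<le> n\<^sup>2 * q"
proof -
  have "((\<lambda>d. (n + d)\<^sup>2 * q) \<longlongrightarrow> (n + 0)\<^sup>2 * q) (at_right 0)"
    by (intro tendsto_intros)
  moreover have "\<forall>\<^sub>F d in at_right 0. a \<le> (n + d)\<^sup>2 * q"
    using eventually_at_right_less[of 0] by eventually_elim (auto intro: le)
  ultimately show ?thesis by (simp add: tendsto_lowerbound)
qed

lemma sqnorm_le_op_norm_L2: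
  assumes c: "c \<in> L2_bounds M P" and f: "L2fun M f"
  shows "sqnorm M (P f) \<le> ennreal ((op_norm_L2 M P)\<^sup>2) * sqnorm M f"
proof -
  let ?n = "op_norm_L2 M P"
  have bound: "sqnorm M (P f) \<le> ennreal (d\<^sup>2) * sqnorm M f" if "?n < d" for d
    using L2_boundsD[OF L2_bounds_gt_op_norm[OF c that] f] .
  obtain q where q: "sqnorm M f = ennreal q" "0 \<le> q"
    using f unfolding L2fun_def by (cases "sqnorm M f") auto
  have "sqnorm M (P f) \<le> ennreal ((?n + 1)\<^sup>2 * q)"
    using bound[of "?n + 1"] q by (simp add: ennreal_mult)
  then obtain a where a: "sqnorm M (P f) = ennreal a" "0 \<le> a"
    by (cases "sqnorm M (P f)") (auto simp: top_unique)
  have "a \<le> ?n\<^sup>2 * q"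
  proof (rule real_le_square_mult_limit)
    fix d assume "?n < d"
    from bound[OF this] show "a \<le> d\<^sup>2 * q"
      using a q by (simp add: ennreal_mult[symmetric])
  qed (use op_norm_L2_nonneg[OF c] q in auto)
  then show ?thesis
    using a q by (simp add: ennreal_mult[symmetric] ennreal_leI)
qed

lemma L2_bounds_add:
  assumes c: "c \<in> L2_bounds M P" and d: "d \<in> L2_bounds M Q" and "0 < c" "0 < d"
    and meas: "\<And>f. L2fun M f \<Longrightarrow> P f \<in> borel_measurable M \<and> Q f \<in> borel_measurable M"
  shows "c + d \<in> L2_bounds M (\<lambda>f x. P f x + Q f x)"
proof (rule L2_boundsI)
  show "0 \<le> c + d" using assms by simp
  fix f assume f: "L2fun M f"
  define s where "s = d / c"
  have s: "0 < s" using assms by (simp add: s_def)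
  have "sqnorm M (\<lambda>x. P f x + Q f x)
      \<le> (\<integral>\<^sup>+ x. ennreal (1 + s) * ennreal ((P f x)\<^sup>2) + ennreal (1 + 1 / s) * ennreal ((Q f x)\<^sup>2) \<partial>M)"
  proof (intro nn_integral_mono)
    fix x
    have "ennreal ((P f x + Q f x)\<^sup>2) \<le> ennreal ((1 + s) * (P f x)\<^sup>2 + (1 + 1 / s) * (Q f x)\<^sup>2)"
      by (intro ennreal_leI square_add_le_weighted s)
    also have "\<dots> = ennreal (1 + s) * ennreal ((P f x)\<^sup>2) + ennreal (1 + 1 / s) * ennreal ((Q f x)\<^sup>2)"
      using s by (simp add: ennreal_plus ennreal_mult)
    finally show "ennreal ((P f x + Q f x)\<^sup>2) \<le> \<dots>" .
  qed
  also have "\<dots> = ennreal (1 + s) * sqnorm M (P f) + ennreal (1 + 1 / s) * sqnorm M (Q f)"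
    using meas[OF f] by (subst nn_integral_add) (auto simp: nn_integral_cmult)
  also have "\<dots> \<le> ennreal (1 + s) * (ennreal (c\<^sup>2) * sqnorm M f) + ennreal (1 + 1 / s) * (ennreal (d\<^sup>2) * sqnorm M f)"
    by (intro add_mono mult_left_mono L2_boundsD[OF c f] L2_boundsD[OF d f]) auto
  also have "\<dots> = ennreal ((1 + s) * c\<^sup>2 + (1 + 1 / s) * d\<^sup>2) * sqnorm M f"
  proof -
    have "ennreal ((1 + s) * c\<^sup>2 + (1 + 1 / s) * d\<^sup>2)
        = ennreal (1 + s) * ennreal (c\<^sup>2) + ennreal (1 + 1 / s) * ennreal (d\<^sup>2)"
      using s by (simp add: ennreal_plus ennreal_mult)
    then show ?thesis by (simp only: distrib_right mult.assoc)
  qed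
  also have "(1 + s) * c\<^sup>2 + (1 + 1 / s) * d\<^sup>2 = (c + d)\<^sup>2"
    using assms by (simp add: s_def field_simps power2_eq_square)
  finally show "sqnorm M (\<lambda>x. P f x + Q f x) \<le> ennreal ((c + d)\<^sup>2) * sqnorm M f" .
qed

lemma op_norm_L2_add_le:
  assumes c: "c \<in> L2_bounds M P" and d: "d \<in> L2_bounds M Q"
    and meas: "\<And>f. L2fun M f \<Longrightarrow> P f \<in> borel_measurable M \<and> Q f \<in> borel_measurable M"
  shows "op_norm_L2 M (\<lambda>f x. P f x + Q f x) \<le> op_norm_L2 M P + op_norm_L2 M Q"
proof (rule op_norm_L2_le)
  have "0 \<le> op_norm_L2 M P" "0 \<le> op_norm_L2 M Q"
    using op_norm_L2_nonneg[OF c] op_norm_L2_nonneg[OF d] .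
  then show "0 \<le> op_norm_L2 M P + op_norm_L2 M Q" by simp
  fix e assume e: "op_norm_L2 M P + op_norm_L2 M Q < e"
  define h where "h = (e - (op_norm_L2 M P + op_norm_L2 M Q)) / 2"
  have h: "0 < h" using e by (simp add: h_def)
  have "(op_norm_L2 M P + h) + (op_norm_L2 M Q + h) \<in> L2_bounds M (\<lambda>f x. P f x + Q f x)"
    using h \<open>0 \<le> op_norm_L2 M P\<close> \<open>0 \<le> op_norm_L2 M Q\<close> meas
    by (intro L2_bounds_add L2_bounds_gt_op_norm[OF c] L2_bounds_gt_op_norm[OF d]) auto
  then show "e \<in> L2_bounds M (\<lambda>f x. P f x + Q f x)"
    by (simp add: h_def)
qed

text \<open>Such a bound is needed to know that \<open>L2_bounds\<close> is non-empty: otherwise \<open>op_norm_L2\<close>,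
  an infimum, is a junk value.\<close>

lemma two_in_L2_bounds_centered:
  assumes M: "subprob_space M"
    and P: "\<And>f. L2fun M f \<Longrightarrow> P f \<in> borel_measurable M \<and> sqnorm M (P f) \<le> sqnorm M f"
  shows "2 \<in> L2_bounds M (\<lambda>f x. P f x - (\<integral>y. f y \<partial>M))"
proof (rule L2_boundsI)
  fix f assume f: "L2fun M f"
  then have [measurable]: "f \<in> borel_measurable M" by (simp add: L2fun_def)
  have "sqnorm M (\<lambda>x. P f x - (\<integral>y. f y \<partial>M)) \<le> 2 * sqnorm M (P f) + 2 * sqnorm M (\<lambda>_. \<integral>y. f y \<partial>M)"
    using P[OF f] by (intro sqnorm_diff_le) auto
  also have "\<dots> \<le> 2 * sqnorm M f + 2 * sqnorm M f"
    using P[OF f] by (intro add_mono mult_left_mono sqnorm_mean_le_subprob[OF M]) auto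
  also have "\<dots> = ennreal (2\<^sup>2) * sqnorm M f"
    by (simp flip: distrib_right)
  finally show "sqnorm M (\<lambda>x. P f x - (\<integral>y. f y \<partial>M)) \<le> ennreal (2\<^sup>2) * sqnorm M f" .
qed simp

text \<open>This includes \<open>b = 0\<close> and \<open>b = \<infinity>\<close>, where the junk values of \<open>enn2real\<close> and of division
  make \<open>r = 0\<close>.\<close>

lemma ratio_enn2real_bounds:
  fixes a b :: ennreal and n e :: real
  assumes ab: "b < \<infinity> \<Longrightarrow> a \<le> ennreal n * b" and n: "0 \<le> n" and e: "0 < e"
  defines "r \<equiv> enn2real a / enn2real b"
  shows "r \<le> n" and "a \<le> ennreal (r + e) * b"
proof -
  have "r \<le> n \<and> a \<le> ennreal (r + e) * b"
  proof (cases b)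
    case (real q)
    show ?thesis
    proof (cases "q = 0")
      case True
      with real ab have "a = 0" by simp
      with real True n show ?thesis by (simp add: r_def)
    next
      case False
      with real have q: "0 < q" "b = ennreal q" by auto
      with ab n have "a \<le> ennreal (n * q)" by (simp add: ennreal_mult)
      then obtain s where s: "a = ennreal s" "0 \<le> s" "s \<le> n * q"
        using n q by (cases a) (auto simp: top_unique)
      have r: "r = s / q" using q s by (simp add: r_def)
      then have "r \<le> n" using q s by (simp add: divide_le_eq)
      moreover have "s \<le> (r + e) * q" using q e by (simp add: r distrib_right)
      then have "ennreal s \<le> ennreal ((r + e) * q)"
        by (rule ennreal_leI)
      then have "a \<le> ennreal (r + e) * b"
        using q s e r by (simp add: ennreal_mult del: ennreal_plus)
      ultimately show ?thesis ..
    qed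
  next
    case top
    with n e show ?thesis by (simp add: r_def ennreal_mult_top)
  qed
  then show "r \<le> n" and "a \<le> ennreal (r + e) * b" by auto
qed

lemma nn_integral_const_Icc:
  "0 \<le> c \<Longrightarrow> 0 \<le> r \<Longrightarrow> (\<integral>\<^sup>+ t\<in>{0..r}. ennreal c \<partial>lborel) = ennreal (c * r)"
  by (simp add: nn_integral_cmult_indicator ennreal_mult)

lemma nn_integral_set_eq_emeasure_mult_uniform:
  assumes [measurable]: "g \<in> borel_measurable M" "A \<in> sets M" and fin: "emeasure M A < \<infinity>"
  shows "(\<integral>\<^sup>+ x\<in>A. g x \<partial>M) = emeasure M A * integral\<^sup>N (uniform_measure M A) g"
proof (cases "emeasure M A = 0")
  case True
  then have "A \<in> null_sets M" by (simp add: null_setsI)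
  with True show ?thesis by (simp add: nn_integral_null_set mult.commute)
next
  case False
  with fin show ?thesis
    by (simp add: nn_integral_uniform_measure ennreal_times_divide mult.commute[of "emeasure M A"]
        mult_divide_eq_ennreal)
qed

locale slice_sampler =
  fixes K :: "'a::euclidean_space set" and \<rho> :: "'a \<Rightarrow> real"
    and H :: "real \<Rightarrow> 'a \<Rightarrow> 'a measure"
  assumes K_borel: "K \<in> sets lborel"
    and rho_measurable: "\<rho> \<in> borel_measurable lborel"
    and rho_nonneg: "\<And>x. x \<in> K \<Longrightarrow> 0 \<le> \<rho> x"
    and rho_integral_pos: "0 < (\<integral>\<^sup>+ x\<in>K. ennreal (\<rho> x) \<partial>lborel)"
    and rho_integral_finite: "(\<integral>\<^sup>+ x\<in>K. ennreal (\<rho> x) \<partial>lborel) < \<infinity>"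
    and H_kernel: "(\<lambda>p. H (fst p) (snd p)) \<in> lborel \<Otimes>\<^sub>M lborel \<rightarrow>\<^sub>M subprob_algebra lborel"
    and H_prob: "\<And>t x. x \<in> level_set K \<rho> t \<Longrightarrow> prob_space (H t x)"
    and H_reversible: "\<And>t A B. A \<in> sets lborel \<Longrightarrow> B \<in> sets lborel \<Longrightarrow>
        (\<integral>\<^sup>+ x\<in>A. emeasure (H t x) B \<partial>unif_level K \<rho> t) =
        (\<integral>\<^sup>+ x\<in>B. emeasure (H t x) A \<partial>unif_level K \<rho> t)"
begin

lemmas [measurable] = K_borel rho_measurable

abbreviation "U t \<equiv> unif_level K \<rho> t"

definition Hk_minus_U :: "nat \<Rightarrow> real \<Rightarrow> ('a \<Rightarrow> real) \<Rightarrow> 'a \<Rightarrow> real" where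
  "Hk_minus_U k t f x = kernel_pow H t k f x - (\<integral>y. f y \<partial>U t)"

lemma level_set_measurable[measurable]: "level_set K \<rho> t \<in> sets lborel"
proof -
  have "level_set K \<rho> t = K \<inter> {x \<in> space lborel. t \<le> \<rho> x}"
    by (auto simp: level_set_def)
  also have "\<dots> \<in> sets lborel" by measurable
  finally show ?thesis .
qed

lemma sets_U[simp, measurable_cong]: "sets (U t) = sets lborel"
  and space_U[simp]: "space (U t) = UNIV"
  by (simp_all add: unif_level_def)

lemma measurable_U_iff[simp]: "f \<in> borel_measurable (U t) \<longleftrightarrow> f \<in> borel_measurable lborel"
  unfolding measurable_cong_sets[OF sets_U refl] ..

lemma subprob_space_U: "subprob_space (U t)"
proof (rule subprob_spaceI)
  have "x / x \<le> 1" for x :: ennreal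
  proof (cases x)
    case (real r)
    then show ?thesis by (cases "r = 0") (auto simp: divide_ennreal)
  qed (simp add: ennreal_top_divide)
  then show "emeasure (U t) (space (U t)) \<le> 1"
    using emeasure_uniform_measure[OF level_set_measurable, of UNIV] by (simp add: unif_level_def)
qed (simp add: unif_level_def)

text \<open>\<open>U\<^sub>t(B) = vol(K(t) \<inter> B) / vol(K(t))\<close>, and both volumes are sections at \<open>t\<close> of measurable subsets of
  \<open>\<real> \<times> \<real>\<^sup>d\<close>.\<close>

lemma U_kernel: "U \<in> lborel \<rightarrow>\<^sub>M subprob_algebra lborel"
proof (rule measurable_subprob_algebra)
  fix B :: "'a set" assume B[measurable]: "B \<in> sets lborel"
  define S where "S B = {p \<in> space (lborel \<Otimes>\<^sub>M lborel). snd p \<in> K \<and> fst p \<le> \<rho> (snd p) \<and> snd p \<in> B}"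
    for B :: "'a set"
  have S[measurable]: "S B \<in> sets (lborel \<Otimes>\<^sub>M lborel)" if [measurable]: "B \<in> sets lborel" for B
    unfolding S_def by measurable
  have "emeasure (U t) B = emeasure lborel (Pair t -` S B) / emeasure lborel (Pair t -` S UNIV)" for t
    unfolding unif_level_def using B
    by (subst emeasure_uniform_measure)
      (auto simp: level_set_def S_def space_pair_measure
        intro!: arg_cong2[where f="(/)"] arg_cong[where f="emeasure lborel"])
  then show "(\<lambda>t. emeasure (U t) B) \<in> borel_measurable lborel"
    by (simp add: lborel.measurable_emeasure_Pair)
qed (auto simp: subprob_space_U)

lemma Ht_kernel: "H t \<in> lborel \<rightarrow>\<^sub>M subprob_algebra lborel"
  using measurable_compose[OF measurable_Pair1'[of t lborel lborel] H_kernel] by simp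

lemma sets_H[simp, measurable_cong]: "sets (H t x) = sets lborel"
  using sets_kernel[OF Ht_kernel] by simp

lemma space_H[simp]: "space (H t x) = UNIV"
  using sets_eq_imp_space_eq[OF sets_H] by simp

lemma subprob_space_H: "subprob_space (H t x)"
  using subprob_space_kernel[OF Ht_kernel] by simp

lemma kernel_pow_Suc: "kernel_pow H t (Suc j) f = kernel_op (H t) (kernel_pow H t j f)"
  by (simp add: kernel_pow_def)

lemma kernel_pow_measurable_pair:
  assumes [measurable]: "f \<in> borel_measurable lborel"
  shows "(\<lambda>p. kernel_pow H (fst p) j f (snd p)) \<in> borel_measurable (lborel \<Otimes>\<^sub>M lborel)"
proof (induction j)
  case 0
  then show ?case by (simp add: kernel_pow_def)
next
  case (Suc j)
  have "(\<lambda>q. (fst (fst q), snd q)) \<in> (lborel \<Otimes>\<^sub>M lborel) \<Otimes>\<^sub>M lborel \<rightarrow>\<^sub>M lborel \<Otimes>\<^sub>M (lborel :: 'a measure)"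
    by measurable
  from measurable_compose[OF this Suc.IH]
  have "(\<lambda>(p, y). kernel_pow H (fst p) j f y) \<in> borel_measurable ((lborel \<Otimes>\<^sub>M lborel) \<Otimes>\<^sub>M lborel)"
    by (simp add: split_beta')
  from measurable_kernel_integral[OF this H_kernel] show ?case
    by (simp add: kernel_pow_Suc kernel_op_def)
qed

lemma kernel_pow_measurable[measurable]:
  assumes "f \<in> borel_measurable lborel"
  shows "kernel_pow H t j f \<in> borel_measurable lborel"
  using measurable_Pair2[OF kernel_pow_measurable_pair[OF assms, of j], of t] by simp

lemma U_integral_measurable[measurable]:
  fixes f :: "'a \<Rightarrow> real"
  assumes [measurable]: "f \<in> borel_measurable lborel"
  shows "(\<lambda>t. \<integral>y. f y \<partial>U t) \<in> borel_measurable lborel"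
  by (rule measurable_kernel_integral[where f="\<lambda>t y. f y", OF _ U_kernel]) measurable

text \<open>Reversibility with \<open>A = UNIV\<close> says that \<open>U\<^sub>t\<close> is stationary for \<open>H\<^sub>t\<close>.\<close>

lemma bind_U_H: "U t \<bind> H t = U t"
proof (rule measure_eqI)
  have Ht: "H t \<in> U t \<rightarrow>\<^sub>M subprob_algebra lborel"
    using Ht_kernel by (simp add: measurable_cong_sets[OF sets_U refl])
  then show sets_eq: "sets (U t \<bind> H t) = sets (U t)"
    using sets_bind_measurable by simp
  fix B assume "B \<in> sets (U t \<bind> H t)"
  then have B: "B \<in> sets lborel" using sets_eq by simp
  have "emeasure (U t \<bind> H t) B = (\<integral>\<^sup>+ x\<in>UNIV. emeasure (H t x) B \<partial>U t)"
    using emeasure_bind[OF _ Ht, of B] B by simp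
  also have "\<dots> = (\<integral>\<^sup>+ x\<in>B. emeasure (H t x) UNIV \<partial>U t)"
    using H_reversible[of UNIV B t] B by simp
  also have "\<dots> = (\<integral>\<^sup>+ x. indicator B x \<partial>U t)"
  proof (rule nn_integral_cong_AE)
    have "AE x in U t. x \<in> level_set K \<rho> t"
      unfolding unif_level_def by (rule AE_uniform_measureI) (use level_set_measurable in auto)
    then show "AE x in U t. emeasure (H t x) UNIV * indicator B x = indicator B x"
      by eventually_elim (metis H_prob prob_space.emeasure_space_1 space_H mult_1)
  qed
  also have "\<dots> = emeasure (U t) B" using B by simp
  finally show "emeasure (U t \<bind> H t) B = emeasure (U t) B" .
qed

lemma sqnorm_kernel_op_le:
  fixes g :: "'a \<Rightarrow> real"
  assumes [measurable]: "g \<in> borel_measurable lborel"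
  shows "sqnorm (U t) (kernel_op (H t) g) \<le> sqnorm (U t) g"
proof -
  have Ht: "H t \<in> U t \<rightarrow>\<^sub>M subprob_algebra lborel"
    using Ht_kernel by (simp add: measurable_cong_sets[OF sets_U refl])
  have "sqnorm (U t) (kernel_op (H t) g) \<le> (\<integral>\<^sup>+ x. sqnorm (H t x) g \<partial>U t)"
    unfolding kernel_op_def
    by (intro nn_integral_mono square_integral_le_subprob subprob_space_H) simp
  also have "\<dots> = sqnorm (U t \<bind> H t) g"
    by (rule nn_integral_bind[OF _ Ht, symmetric]) simp
  finally show ?thesis by (simp add: bind_U_H)
qed

lemma sqnorm_kernel_pow_le:
  fixes g :: "'a \<Rightarrow> real"
  assumes [measurable]: "g \<in> borel_measurable lborel"
  shows "sqnorm (U t) (kernel_pow H t j g) \<le> sqnorm (U t) g"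
proof (induction j)
  case (Suc j)
  have "sqnorm (U t) (kernel_pow H t (Suc j) g) \<le> sqnorm (U t) (kernel_pow H t j g)"
    unfolding kernel_pow_Suc by (intro sqnorm_kernel_op_le) simp
  then show ?case using Suc.IH by (rule order_trans)
qed (simp add: kernel_pow_def)

lemma Hk_minus_U_measurable_pair:
  assumes [measurable]: "f \<in> borel_measurable lborel"
  shows "(\<lambda>(t, x). Hk_minus_U k t f x) \<in> borel_measurable (lborel \<Otimes>\<^sub>M lborel)"
  using kernel_pow_measurable_pair[OF assms, of k]
  by (simp add: Hk_minus_U_def split_beta') measurable

lemma two_in_L2_bounds_Hk_minus_U: "2 \<in> L2_bounds (U t) (Hk_minus_U k t)"
proof -
  have "2 \<in> L2_bounds (U t) (\<lambda>f x. kernel_pow H t k f x - (\<integral>y. f y \<partial>U t))"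
    by (rule two_in_L2_bounds_centered[OF subprob_space_U])
      (auto simp: L2fun_def intro: sqnorm_kernel_pow_le)
  then show ?thesis by (simp add: Hk_minus_U_def[abs_def])
qed

lemma sqnorm_U_measurable:
  assumes "(\<lambda>(t, x). g t x) \<in> borel_measurable (lborel \<Otimes>\<^sub>M lborel)"
  shows "(\<lambda>t. sqnorm (U t) (g t)) \<in> borel_measurable lborel"
  by (rule nn_integral_measurable_subprob_algebra2[OF _ U_kernel]) (use assms in measurable)

lemma emeasure_level_set_finite:
  assumes "0 < t"
  shows "emeasure lborel (level_set K \<rho> t) < \<infinity>"
proof -
  have "ennreal t * emeasure lborel (level_set K \<rho> t) = (\<integral>\<^sup>+ x. ennreal t * indicator (level_set K \<rho> t) x \<partial>lborel)"
    by (rule nn_integral_cmult_indicator[symmetric, OF level_set_measurable])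
  also have "\<dots> \<le> (\<integral>\<^sup>+ x\<in>K. ennreal (\<rho> x) \<partial>lborel)"
    by (intro nn_integral_mono) (auto simp: level_set_def intro: ennreal_leI split: split_indicator)
  also have "\<dots> < \<infinity>" by (rule rho_integral_finite)
  finally show ?thesis
    using assms by (auto simp: ennreal_mult_less_top)
qed

lemma layer_cake:
  fixes G :: "real \<Rightarrow> 'a \<Rightarrow> ennreal"
  assumes [measurable]: "(\<lambda>(t, x). G t x) \<in> borel_measurable (lborel \<Otimes>\<^sub>M lborel)"
  shows "(\<integral>\<^sup>+ x\<in>K. (\<integral>\<^sup>+ t\<in>{0..\<rho> x}. G t x \<partial>lborel) \<partial>lborel)
    = (\<integral>\<^sup>+ t\<in>{0<..}. emeasure lborel (level_set K \<rho> t) * integral\<^sup>N (U t) (G t) \<partial>lborel)"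
proof -
  define F where "F t x = G t x * indicator K x * indicator {0..\<rho> x} t" for t x
  have [measurable]: "(\<lambda>(t, x). F t x) \<in> borel_measurable (lborel \<Otimes>\<^sub>M lborel)"
    unfolding F_def by (simp add: split_beta' indicator_def) measurable
  have "(\<integral>\<^sup>+ x\<in>K. (\<integral>\<^sup>+ t\<in>{0..\<rho> x}. G t x \<partial>lborel) \<partial>lborel) = (\<integral>\<^sup>+ x. (\<integral>\<^sup>+ t. F t x \<partial>lborel) \<partial>lborel)"
  proof (intro nn_integral_cong)
    fix x
    show "(\<integral>\<^sup>+ t\<in>{0..\<rho> x}. G t x \<partial>lborel) * indicator K x = (\<integral>\<^sup>+ t. F t x \<partial>lborel)"
      by (cases "x \<in> K") (auto simp: F_def intro!: nn_integral_cong split: split_indicator)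
  qed
  also have "\<dots> = (\<integral>\<^sup>+ t. (\<integral>\<^sup>+ x. F t x \<partial>lborel) \<partial>lborel)"
    by (rule lborel_pair.Fubini') measurable
  also have "\<dots> = (\<integral>\<^sup>+ t\<in>{0<..}. emeasure lborel (level_set K \<rho> t) * integral\<^sup>N (U t) (G t) \<partial>lborel)"
  proof (rule nn_integral_cong_AE)
    show "AE t in lborel. (\<integral>\<^sup>+ x. F t x \<partial>lborel)
        = emeasure lborel (level_set K \<rho> t) * integral\<^sup>N (U t) (G t) * indicator {0<..} t"
      using AE_lborel_singleton[of 0]
    proof eventually_elim
      case (elim t)
      show ?case
      proof (cases "0 < t")
        case True
        have "F t x = G t x * indicator (level_set K \<rho> t) x" for x
          using True by (auto simp: F_def level_set_def split: split_indicator)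
        moreover have "G t \<in> borel_measurable lborel"
          using measurable_Pair2[OF assms, of t] by simp
        ultimately show ?thesis
          using True unfolding unif_level_def
          by (simp add: nn_integral_set_eq_emeasure_mult_uniform[OF _ level_set_measurable
                emeasure_level_set_finite[OF True]])
      qed (use elim in \<open>auto simp: F_def split: split_indicator\<close>)
    qed
  qed
  finally show ?thesis .
qed

definition rho_sqnorm :: "('a \<Rightarrow> real) \<Rightarrow> ennreal" where
  "rho_sqnorm h = (\<integral>\<^sup>+ x\<in>K. ennreal (\<rho> x * (h x)\<^sup>2) \<partial>lborel)"

lemma rho_sqnorm_layer_cake:
  assumes [measurable]: "f \<in> borel_measurable lborel"
  shows "rho_sqnorm f = (\<integral>\<^sup>+ t\<in>{0<..}. emeasure lborel (level_set K \<rho> t) * sqnorm (U t) f \<partial>lborel)"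
proof -
  have "rho_sqnorm f = (\<integral>\<^sup>+ x\<in>K. (\<integral>\<^sup>+ t\<in>{0..\<rho> x}. ennreal ((f x)\<^sup>2) \<partial>lborel) \<partial>lborel)"
    unfolding rho_sqnorm_def
  proof (intro nn_integral_cong)
    fix x
    show "ennreal (\<rho> x * (f x)\<^sup>2) * indicator K x
        = (\<integral>\<^sup>+ t\<in>{0..\<rho> x}. ennreal ((f x)\<^sup>2) \<partial>lborel) * indicator K x"
      using nn_integral_const_Icc[of "(f x)\<^sup>2" "\<rho> x"] rho_nonneg[of x]
      by (auto simp: mult.commute split: split_indicator)
  qed
  also have "\<dots> = (\<integral>\<^sup>+ t\<in>{0<..}. emeasure lborel (level_set K \<rho> t) * sqnorm (U t) f \<partial>lborel)"
    by (rule layer_cake) measurable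
  finally show ?thesis .
qed

lemma layer_cake_weighted_le:
  fixes G :: "real \<Rightarrow> 'a \<Rightarrow> real" and w :: "real \<Rightarrow> real"
  assumes G[measurable]: "(\<lambda>(t, x). G t x) \<in> borel_measurable (lborel \<Otimes>\<^sub>M lborel)"
    and [measurable]: "w \<in> borel_measurable lborel" "f \<in> borel_measurable lborel"
    and w: "\<And>t. 0 < w t"
    and le: "\<And>t. 0 < t \<Longrightarrow> sqnorm (U t) (G t) \<le> ennreal ((w t)\<^sup>2) * sqnorm (U t) f"
  shows "(\<integral>\<^sup>+ x\<in>K. (\<integral>\<^sup>+ t\<in>{0..\<rho> x}. ennreal ((G t x)\<^sup>2 / (w t)\<^sup>2) \<partial>lborel) \<partial>lborel) \<le> rho_sqnorm f"
proof -
  have "(\<integral>\<^sup>+ x\<in>K. (\<integral>\<^sup>+ t\<in>{0..\<rho> x}. ennreal ((G t x)\<^sup>2 / (w t)\<^sup>2) \<partial>lborel) \<partial>lborel)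
      = (\<integral>\<^sup>+ t\<in>{0<..}. emeasure lborel (level_set K \<rho> t)
          * (\<integral>\<^sup>+ x. ennreal ((G t x)\<^sup>2 / (w t)\<^sup>2) \<partial>U t) \<partial>lborel)"
    by (rule layer_cake) measurable
  also have "\<dots> \<le> (\<integral>\<^sup>+ t\<in>{0<..}. emeasure lborel (level_set K \<rho> t) * sqnorm (U t) f \<partial>lborel)"
  proof (intro nn_integral_mono)
    fix t :: real
    have w2: "0 < (w t)\<^sup>2" using w[of t] by simp
    have [measurable]: "G t \<in> borel_measurable lborel"
      using measurable_Pair2[OF G, of t] by simp
    have "(\<integral>\<^sup>+ x. ennreal ((G t x)\<^sup>2 / (w t)\<^sup>2) \<partial>U t) \<le> sqnorm (U t) f" if "0 < t"
    proof -
      have "(\<integral>\<^sup>+ x. ennreal ((G t x)\<^sup>2 / (w t)\<^sup>2) \<partial>U t) = sqnorm (U t) (G t) / ennreal ((w t)\<^sup>2)"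
        using w2 by (simp add: divide_ennreal[symmetric] nn_integral_divide)
      also have "\<dots> \<le> sqnorm (U t) f"
        using w2 le[OF that] by (intro divide_le_posI_ennreal) simp_all
      finally show ?thesis .
    qed
    then show "emeasure lborel (level_set K \<rho> t) * (\<integral>\<^sup>+ x. ennreal ((G t x)\<^sup>2 / (w t)\<^sup>2) \<partial>U t)
          * indicator {0<..} t
        \<le> emeasure lborel (level_set K \<rho> t) * sqnorm (U t) f * indicator {0<..} t"
      by (auto intro: mult_left_mono split: split_indicator)
  qed
  also have "\<dots> = rho_sqnorm f"
    by (rule rho_sqnorm_layer_cake[symmetric]) measurable
  finally show ?thesis .
qed

lemma nn_integral_Icc_rho_measurable:
  fixes F :: "'a \<Rightarrow> real \<Rightarrow> ennreal"
  assumes "(\<lambda>(x, t). F x t) \<in> borel_measurable (lborel \<Otimes>\<^sub>M lborel)"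
  shows "(\<lambda>x. \<integral>\<^sup>+ t\<in>{0..\<rho> x}. F x t \<partial>lborel) \<in> borel_measurable lborel"
proof -
  have "(\<lambda>(x, t). F x t * indicator {0..\<rho> x} t) \<in> borel_measurable (lborel \<Otimes>\<^sub>M lborel)"
    using assms by (simp add: split_beta' indicator_def) measurable
  from lborel.borel_measurable_nn_integral[OF this] show ?thesis by simp
qed

lemma set_integral_Icc_rho_measurable:
  fixes F :: "'a \<Rightarrow> real \<Rightarrow> real"
  assumes "(\<lambda>(x, t). F x t) \<in> borel_measurable (lborel \<Otimes>\<^sub>M lborel)"
  shows "(\<lambda>x. set_lebesgue_integral lborel {0..\<rho> x} (F x)) \<in> borel_measurable lborel"
proof -
  have "(\<lambda>(x, t). indicator {0..\<rho> x} t *\<^sub>R F x t) \<in> borel_measurable (lborel \<Otimes>\<^sub>M lborel)"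
    using assms by (simp add: split_beta' indicator_def) measurable
  from lborel.borel_measurable_lebesgue_integral[OF this] show ?thesis
    by (simp add: set_lebesgue_integral_def)
qed

lemma hybrid_op_measurable[measurable]:
  assumes [measurable]: "f \<in> borel_measurable lborel"
  shows "hybrid_op \<rho> H k f \<in> borel_measurable lborel"
proof -
  have "(\<lambda>(x, t). kernel_pow H t k f x) \<in> borel_measurable (lborel \<Otimes>\<^sub>M lborel)"
    using measurable_pair_swap[OF kernel_pow_measurable_pair[OF assms, of k]] by simp
  note [measurable] = set_integral_Icc_rho_measurable[OF this]
  show ?thesis unfolding hybrid_op_def[abs_def] by measurable
qed

lemma slice_op_measurable[measurable]:
  assumes [measurable]: "f \<in> borel_measurable lborel"
  shows "slice_op K \<rho> f \<in> borel_measurable lborel"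
proof -
  have "(\<lambda>(x, t). \<integral>y. f y \<partial>U t) \<in> borel_measurable (lborel \<Otimes>\<^sub>M lborel)"
    by (simp add: split_beta') measurable
  note [measurable] = set_integral_Icc_rho_measurable[OF this]
  show ?thesis unfolding slice_op_def[abs_def] by measurable
qed

text \<open>The Cauchy--Schwarz inequality on each slice \<open>[0, \<rho> x]\<close>, with a weight \<open>w\<close> that balances it
  against the \<open>U\<^sub>t\<close>-bounds, followed by the layer-cake formula.\<close>

lemma slice_average_square_le:
  fixes G :: "real \<Rightarrow> 'a \<Rightarrow> real" and w :: "real \<Rightarrow> real"
  assumes G[measurable]: "(\<lambda>(t, x). G t x) \<in> borel_measurable (lborel \<Otimes>\<^sub>M lborel)"
    and [measurable]: "w \<in> borel_measurable lborel" "f \<in> borel_measurable lborel"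
    and w: "\<And>t. 0 < w t"
    and le: "\<And>t. 0 < t \<Longrightarrow> sqnorm (U t) (G t) \<le> ennreal ((w t)\<^sup>2) * sqnorm (U t) f"
    and w_int: "\<And>x. x \<in> K \<Longrightarrow> (\<integral>\<^sup>+ t\<in>{0..\<rho> x}. ennreal ((w t)\<^sup>2) \<partial>lborel) \<le> ennreal (C\<^sup>2 * \<rho> x)"
  shows "(\<integral>\<^sup>+ x\<in>K. (\<integral>\<^sup>+ t\<in>{0..\<rho> x}. ennreal \<bar>G t x\<bar> \<partial>lborel)\<^sup>2 / ennreal (\<rho> x) \<partial>lborel)
    \<le> ennreal (C\<^sup>2) * rho_sqnorm f"
proof -
  define B where "B x = (\<integral>\<^sup>+ t\<in>{0..\<rho> x}. ennreal ((G t x)\<^sup>2 / (w t)\<^sup>2) \<partial>lborel)" for x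
  have [measurable]: "B \<in> borel_measurable lborel"
    unfolding B_def[abs_def]
    by (rule nn_integral_Icc_rho_measurable) (use measurable_pair_swap[OF G] in simp)
  have pointwise: "(\<integral>\<^sup>+ t\<in>{0..\<rho> x}. ennreal \<bar>G t x\<bar> \<partial>lborel)\<^sup>2 / ennreal (\<rho> x) \<le> ennreal (C\<^sup>2) * B x"
    if x: "x \<in> K" for x
  proof (cases "\<rho> x = 0")
    case True
    then show ?thesis by simp
  next
    case False
    with rho_nonneg[OF x] have r: "0 < \<rho> x" by simp
    have [measurable]: "(\<lambda>t. G t x) \<in> borel_measurable lborel"
      using measurable_Pair1[OF G, of x] by simp
    have "(\<integral>\<^sup>+ t\<in>{0..\<rho> x}. ennreal \<bar>G t x\<bar> \<partial>lborel)\<^sup>2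
        \<le> (\<integral>\<^sup>+ t\<in>{0..\<rho> x}. ennreal ((w t)\<^sup>2) \<partial>lborel) * B x"
      unfolding B_def by (rule nn_integral_weighted_Cauchy_Schwarz) (simp_all add: w)
    also have "\<dots> \<le> ennreal (C\<^sup>2 * \<rho> x) * B x"
      by (intro mult_right_mono w_int[OF x]) simp
    also have "\<dots> = ennreal (\<rho> x) * (ennreal (C\<^sup>2) * B x)"
      using r by (simp add: ennreal_mult mult_ac)
    finally show ?thesis
      using r by (intro divide_le_posI_ennreal) simp_all
  qed
  have "(\<integral>\<^sup>+ x\<in>K. (\<integral>\<^sup>+ t\<in>{0..\<rho> x}. ennreal \<bar>G t x\<bar> \<partial>lborel)\<^sup>2 / ennreal (\<rho> x) \<partial>lborel)
      \<le> (\<integral>\<^sup>+ x\<in>K. ennreal (C\<^sup>2) * B x \<partial>lborel)"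
    by (intro nn_integral_mono) (auto intro: pointwise split: split_indicator)
  also have "\<dots> = ennreal (C\<^sup>2) * (\<integral>\<^sup>+ x\<in>K. B x \<partial>lborel)"
    by (simp add: nn_integral_cmult mult.assoc)
  also have "\<dots> \<le> ennreal (C\<^sup>2) * rho_sqnorm f"
    unfolding B_def by (intro mult_left_mono layer_cake_weighted_le[OF G]) (simp_all add: w le)
  finally show ?thesis .
qed

definition Hk_minus_U_norm_integral :: "nat \<Rightarrow> 'a \<Rightarrow> ennreal" where
  "Hk_minus_U_norm_integral k x = (\<integral>\<^sup>+ t\<in>{0..\<rho> x}. ennreal ((op_norm_L2 (U t) (Hk_minus_U k t))\<^sup>2) \<partial>lborel)"

lemma beta_eq_SUP: "beta K \<rho> H k = (SUP x\<in>K. sqrt (enn2real (Hk_minus_U_norm_integral k x) / \<rho> x))"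
  unfolding beta_def Hk_minus_U_norm_integral_def Hk_minus_U_def[abs_def] ..

lemma Hk_minus_U_norm_integral_le:
  assumes "x \<in> K"
  shows "Hk_minus_U_norm_integral k x \<le> ennreal (4 * \<rho> x)"
proof -
  have "(op_norm_L2 (U t) (Hk_minus_U k t))\<^sup>2 \<le> 2\<^sup>2" for t
    using op_norm_L2_nonneg[OF two_in_L2_bounds_Hk_minus_U] op_norm_L2_le_bound[OF two_in_L2_bounds_Hk_minus_U]
    by (intro power_mono) auto
  then have "Hk_minus_U_norm_integral k x \<le> (\<integral>\<^sup>+ t\<in>{0..\<rho> x}. ennreal 4 \<partial>lborel)"
    unfolding Hk_minus_U_norm_integral_def by (intro nn_integral_mono mult_right_mono ennreal_leI) simp_all
  also have "\<dots> = ennreal (4 * \<rho> x)"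
    using rho_nonneg[OF assms] by (rule nn_integral_const_Icc[rotated]) simp
  finally show ?thesis .
qed

lemma beta_term_le_two:
  assumes "x \<in> K"
  shows "sqrt (enn2real (Hk_minus_U_norm_integral k x) / \<rho> x) \<le> 2"
proof -
  have "enn2real (Hk_minus_U_norm_integral k x) \<le> 4 * \<rho> x"
    using Hk_minus_U_norm_integral_le[OF assms, of k] rho_nonneg[OF assms] by (simp add: enn2real_leI)
  then have "enn2real (Hk_minus_U_norm_integral k x) / \<rho> x \<le> 2\<^sup>2"
    using rho_nonneg[OF assms] by (cases "\<rho> x = 0") (auto simp: divide_le_eq)
  then show ?thesis
    by (metis real_sqrt_abs real_sqrt_le_mono abs_numeral)
qed

lemma beta_term_le_beta:
  "x \<in> K \<Longrightarrow> sqrt (enn2real (Hk_minus_U_norm_integral k x) / \<rho> x) \<le> beta K \<rho> H k"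
  unfolding beta_eq_SUP by (rule cSup_upper) (auto intro!: bdd_aboveI[of _ 2] beta_term_le_two)

lemma beta_nonneg: "0 \<le> beta K \<rho> H k"
proof -
  have "K \<noteq> {}"
    using rho_integral_pos by auto
  then obtain x where x: "x \<in> K" by blast
  have "0 \<le> sqrt (enn2real (Hk_minus_U_norm_integral k x) / \<rho> x)"
    using rho_nonneg[OF x] by simp
  then show ?thesis
    using beta_term_le_beta[OF x, of k] by linarith
qed

lemma Hk_minus_U_norm_integral_le_beta:
  assumes x: "x \<in> K"
  shows "Hk_minus_U_norm_integral k x \<le> ennreal ((beta K \<rho> H k)\<^sup>2 * \<rho> x)"
proof (cases "\<rho> x = 0")
  case True
  then show ?thesis using Hk_minus_U_norm_integral_le[OF x, of k] by simp
next
  case False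
  with rho_nonneg[OF x] have r: "0 < \<rho> x" by simp
  let ?d = "enn2real (Hk_minus_U_norm_integral k x)"
  have "?d / \<rho> x \<le> (beta K \<rho> H k)\<^sup>2"
    using power_mono[OF beta_term_le_beta[OF x, of k], of 2] r by simp
  then have "?d \<le> (beta K \<rho> H k)\<^sup>2 * \<rho> x"
    using r by (simp add: divide_le_eq)
  then have "ennreal ?d \<le> ennreal ((beta K \<rho> H k)\<^sup>2 * \<rho> x)"
    by (rule ennreal_leI)
  moreover have "Hk_minus_U_norm_integral k x < \<infinity>"
    using Hk_minus_U_norm_integral_le[OF x, of k] by (simp add: top.not_eq_extremum le_less_trans)
  ultimately show ?thesis
    by simp
qed

lemma nn_integral_weight_le_beta:
  assumes [measurable]: "r \<in> borel_measurable lborel" and r: "\<And>t. 0 \<le> r t"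
    and r_le: "\<And>t. r t \<le> (op_norm_L2 (U t) (Hk_minus_U k t))\<^sup>2"
    and e: "0 \<le> e" and x: "x \<in> K"
  shows "(\<integral>\<^sup>+ t\<in>{0..\<rho> x}. ennreal (r t + e) \<partial>lborel) \<le> ennreal (((beta K \<rho> H k)\<^sup>2 + e) * \<rho> x)"
proof -
  have "(\<integral>\<^sup>+ t\<in>{0..\<rho> x}. ennreal (r t + e) \<partial>lborel)
      = (\<integral>\<^sup>+ t. ennreal (r t) * indicator {0..\<rho> x} t + ennreal e * indicator {0..\<rho> x} t \<partial>lborel)"
    using r e by (intro nn_integral_cong) (simp only: ennreal_plus distrib_right)
  also have "\<dots> = (\<integral>\<^sup>+ t\<in>{0..\<rho> x}. ennreal (r t) \<partial>lborel) + (\<integral>\<^sup>+ t\<in>{0..\<rho> x}. ennreal e \<partial>lborel)"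
    by (rule nn_integral_add) measurable
  also have "\<dots> \<le> ennreal ((beta K \<rho> H k)\<^sup>2 * \<rho> x) + ennreal (e * \<rho> x)"
  proof (rule add_mono)
    have "(\<integral>\<^sup>+ t\<in>{0..\<rho> x}. ennreal (r t) \<partial>lborel) \<le> Hk_minus_U_norm_integral k x"
      unfolding Hk_minus_U_norm_integral_def
      by (intro nn_integral_mono mult_right_mono ennreal_leI r_le) simp
    also have "\<dots> \<le> ennreal ((beta K \<rho> H k)\<^sup>2 * \<rho> x)"
      by (rule Hk_minus_U_norm_integral_le_beta[OF x])
    finally show "(\<integral>\<^sup>+ t\<in>{0..\<rho> x}. ennreal (r t) \<partial>lborel) \<le> ennreal ((beta K \<rho> H k)\<^sup>2 * \<rho> x)" .
    show "(\<integral>\<^sup>+ t\<in>{0..\<rho> x}. ennreal e \<partial>lborel) \<le> ennreal (e * \<rho> x)"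
      using e rho_nonneg[OF x] by (simp add: nn_integral_const_Icc)
  qed
  also have "\<dots> = ennreal (((beta K \<rho> H k)\<^sup>2 + e) * \<rho> x)"
    using e rho_nonneg[OF x] by (simp add: distrib_right ennreal_plus)
  finally show ?thesis .
qed

text \<open>The map \<open>t \<mapsto> \<parallel>H\<^sub>t\<^sup>k - U\<^sub>t\<parallel>\<close> need not be measurable, so the weight is built from the measurable
  ratio \<open>\<parallel>(H\<^sub>t\<^sup>k - U\<^sub>t) f\<parallel>\<^sup>2 / \<parallel>f\<parallel>\<^sup>2\<close> instead, enlarged by \<open>e\<close> to make it positive.\<close>

lemma Hk_minus_U_weight:
  assumes [measurable]: "f \<in> borel_measurable lborel" and e: "0 < e"
  obtains w where "w \<in> borel_measurable lborel" "\<And>t. 0 < w t"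
    "\<And>t. sqnorm (U t) (Hk_minus_U k t f) \<le> ennreal ((w t)\<^sup>2) * sqnorm (U t) f"
    "\<And>x. x \<in> K \<Longrightarrow> (\<integral>\<^sup>+ t\<in>{0..\<rho> x}. ennreal ((w t)\<^sup>2) \<partial>lborel)
      \<le> ennreal (((beta K \<rho> H k)\<^sup>2 + e) * \<rho> x)"
proof -
  define r where "r t = enn2real (sqnorm (U t) (Hk_minus_U k t f)) / enn2real (sqnorm (U t) f)" for t
  have bound: "sqnorm (U t) (Hk_minus_U k t f) \<le> ennreal ((op_norm_L2 (U t) (Hk_minus_U k t))\<^sup>2) * sqnorm (U t) f"
    if "sqnorm (U t) f < \<infinity>" for t
  proof (rule sqnorm_le_op_norm_L2[OF two_in_L2_bounds_Hk_minus_U])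
    show "L2fun (U t) f" using that by (simp add: L2fun_def)
  qed
  have r_le: "r t \<le> (op_norm_L2 (U t) (Hk_minus_U k t))\<^sup>2" for t
    unfolding r_def by (rule ratio_enn2real_bounds(1)[OF bound zero_le_power2 e])
  have r_bound: "sqnorm (U t) (Hk_minus_U k t f) \<le> ennreal (r t + e) * sqnorm (U t) f" for t
    unfolding r_def by (rule ratio_enn2real_bounds(2)[OF bound zero_le_power2 e])
  have r_nonneg: "0 \<le> r t" for t
    by (simp add: r_def)
  have "(\<lambda>t. sqnorm (U t) (Hk_minus_U k t f)) \<in> borel_measurable lborel"
    using sqnorm_U_measurable[OF Hk_minus_U_measurable_pair[OF assms(1), of k]] by simp
  moreover have "(\<lambda>t. sqnorm (U t) f) \<in> borel_measurable lborel"
    by (rule sqnorm_U_measurable) measurable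
  ultimately have r_measurable: "r \<in> borel_measurable lborel"
    unfolding r_def[abs_def] by measurable
  have w2: "(sqrt (r t + e))\<^sup>2 = r t + e" for t
    using r_nonneg[of t] e by simp
  show ?thesis
  proof (rule that[of "\<lambda>t. sqrt (r t + e)"])
    show "(\<lambda>t. sqrt (r t + e)) \<in> borel_measurable lborel"
      using r_measurable by measurable
    show "0 < sqrt (r t + e)" for t
      using r_nonneg[of t] e by (simp only: real_sqrt_gt_zero add_nonneg_pos)
    show "sqnorm (U t) (Hk_minus_U k t f) \<le> ennreal ((sqrt (r t + e))\<^sup>2) * sqnorm (U t) f" for t
      unfolding w2 by (rule r_bound)
    show "(\<integral>\<^sup>+ t\<in>{0..\<rho> x}. ennreal ((sqrt (r t + e))\<^sup>2) \<partial>lborel)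
        \<le> ennreal (((beta K \<rho> H k)\<^sup>2 + e) * \<rho> x)" if "x \<in> K" for x
      unfolding w2 using e by (intro nn_integral_weight_le_beta r_measurable r_nonneg r_le that) simp
  qed
qed

lemma rho_square_slice_op_le:
  assumes "0 \<le> \<rho> x"
  shows "ennreal (\<rho> x * (slice_op K \<rho> f x)\<^sup>2)
    \<le> (\<integral>\<^sup>+ t\<in>{0..\<rho> x}. ennreal \<bar>\<integral>y. f y \<partial>U t\<bar> \<partial>lborel)\<^sup>2 / ennreal (\<rho> x)"
  using ennreal_mult_square_div_le[OF assms abs_set_integral_le_nn_integral]
  by (simp add: slice_op_def)

lemma rho_square_hybrid_minus_slice_le:
  assumes f[measurable]: "f \<in> borel_measurable lborel" and "0 \<le> \<rho> x"
  shows "ennreal (\<rho> x * (hybrid_op \<rho> H k f x - slice_op K \<rho> f x)\<^sup>2)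
    \<le> (\<integral>\<^sup>+ t\<in>{0..\<rho> x}. ennreal \<bar>Hk_minus_U k t f x\<bar> \<partial>lborel)\<^sup>2 / ennreal (\<rho> x)"
proof -
  have [measurable]: "(\<lambda>t. Hk_minus_U k t f x) \<in> borel_measurable lborel"
    using measurable_Pair1[OF Hk_minus_U_measurable_pair[OF f], of x] by simp
  have eq: "hybrid_op \<rho> H k f x - slice_op K \<rho> f x
      = (set_lebesgue_integral lborel {0..\<rho> x} (\<lambda>t. Hk_minus_U k t f x + (\<integral>y. f y \<partial>U t))
        - set_lebesgue_integral lborel {0..\<rho> x} (\<lambda>t. \<integral>y. f y \<partial>U t)) / \<rho> x"
    by (simp add: hybrid_op_def slice_op_def Hk_minus_U_def diff_divide_distrib)
  have "ennreal \<bar>set_lebesgue_integral lborel {0..\<rho> x} (\<lambda>t. Hk_minus_U k t f x + (\<integral>y. f y \<partial>U t))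
      - set_lebesgue_integral lborel {0..\<rho> x} (\<lambda>t. \<integral>y. f y \<partial>U t)\<bar>
      \<le> (\<integral>\<^sup>+ t\<in>{0..\<rho> x}. ennreal \<bar>Hk_minus_U k t f x\<bar> \<partial>lborel)"
    by (rule abs_set_integral_add_diff_le) measurable
  then show ?thesis
    unfolding eq by (rule ennreal_mult_square_div_le[OF assms(2)])
qed

lemma rho_sqnorm_slice_op_le:
  assumes [measurable]: "f \<in> borel_measurable lborel"
  shows "rho_sqnorm (slice_op K \<rho> f) \<le> rho_sqnorm f"
proof -
  have "rho_sqnorm (slice_op K \<rho> f)
      \<le> (\<integral>\<^sup>+ x\<in>K. (\<integral>\<^sup>+ t\<in>{0..\<rho> x}. ennreal \<bar>\<integral>y. f y \<partial>U t\<bar> \<partial>lborel)\<^sup>2 / ennreal (\<rho> x) \<partial>lborel)"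
    unfolding rho_sqnorm_def
    by (intro nn_integral_mono) (auto intro: rho_square_slice_op_le rho_nonneg split: split_indicator)
  also have "\<dots> \<le> ennreal (1\<^sup>2) * rho_sqnorm f"
  proof (rule slice_average_square_le[where w="\<lambda>_. 1"])
    show "(\<lambda>(t, x). \<integral>y. f y \<partial>U t) \<in> borel_measurable (lborel \<Otimes>\<^sub>M lborel)"
      by (simp add: split_beta') measurable
    show "sqnorm (U t) (\<lambda>x. \<integral>y. f y \<partial>U t) \<le> ennreal (1\<^sup>2) * sqnorm (U t) f" for t
      using sqnorm_mean_le_subprob[OF subprob_space_U, of f] by simp
    show "(\<integral>\<^sup>+ t\<in>{0..\<rho> x}. ennreal (1\<^sup>2) \<partial>lborel) \<le> ennreal (1\<^sup>2 * \<rho> x)" if "x \<in> K" for x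
      using nn_integral_const_Icc[of 1 "\<rho> x"] rho_nonneg[OF that] by simp
  qed simp_all
  finally show ?thesis by simp
qed

lemma rho_sqnorm_hybrid_minus_slice_le:
  assumes f[measurable]: "f \<in> borel_measurable lborel" and c: "beta K \<rho> H k < c"
  shows "rho_sqnorm (\<lambda>x. hybrid_op \<rho> H k f x - slice_op K \<rho> f x) \<le> ennreal (c\<^sup>2) * rho_sqnorm f"
proof -
  define e where "e = c\<^sup>2 - (beta K \<rho> H k)\<^sup>2"
  have "(beta K \<rho> H k)\<^sup>2 < c\<^sup>2"
    using beta_nonneg c by (intro power_strict_mono) auto
  then have e: "0 < e" by (simp add: e_def)
  obtain w where w[measurable]: "w \<in> borel_measurable lborel" and w_pos: "\<And>t. 0 < w t"
    and w_le: "\<And>t. sqnorm (U t) (Hk_minus_U k t f) \<le> ennreal ((w t)\<^sup>2) * sqnorm (U t) f"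
    and w_int: "\<And>x. x \<in> K \<Longrightarrow> (\<integral>\<^sup>+ t\<in>{0..\<rho> x}. ennreal ((w t)\<^sup>2) \<partial>lborel)
      \<le> ennreal (((beta K \<rho> H k)\<^sup>2 + e) * \<rho> x)"
    by (rule Hk_minus_U_weight[OF f e, where k=k]) blast
  have c_eq: "(beta K \<rho> H k)\<^sup>2 + e = c\<^sup>2" by (simp add: e_def)
  have "rho_sqnorm (\<lambda>x. hybrid_op \<rho> H k f x - slice_op K \<rho> f x)
      \<le> (\<integral>\<^sup>+ x\<in>K. (\<integral>\<^sup>+ t\<in>{0..\<rho> x}. ennreal \<bar>Hk_minus_U k t f x\<bar> \<partial>lborel)\<^sup>2 / ennreal (\<rho> x) \<partial>lborel)"
    unfolding rho_sqnorm_def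
    by (intro nn_integral_mono) (auto intro: rho_square_hybrid_minus_slice_le rho_nonneg split: split_indicator)
  also have "\<dots> \<le> ennreal (c\<^sup>2) * rho_sqnorm f"
    by (rule slice_average_square_le[OF Hk_minus_U_measurable_pair[OF f] w f w_pos w_le w_int[unfolded c_eq]])
  finally show ?thesis .
qed

abbreviation "\<pi> \<equiv> target K \<rho>"

definition normalizer :: real where
  "normalizer = (\<integral>y. indicator K y * \<rho> y \<partial>lborel)"

lemma ennreal_normalizer: "ennreal normalizer = (\<integral>\<^sup>+ x\<in>K. ennreal (\<rho> x) \<partial>lborel)"
proof -
  have eq: "(\<integral>\<^sup>+ y. ennreal (indicator K y * \<rho> y) \<partial>lborel) = (\<integral>\<^sup>+ x\<in>K. ennreal (\<rho> x) \<partial>lborel)"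
    by (intro nn_integral_cong) (auto split: split_indicator)
  have "(\<integral>\<^sup>+ y. ennreal (norm (indicator K y * \<rho> y)) \<partial>lborel) = (\<integral>\<^sup>+ x\<in>K. ennreal (\<rho> x) \<partial>lborel)"
    using rho_nonneg by (intro nn_integral_cong) (auto split: split_indicator)
  then have "integrable lborel (\<lambda>y. indicator K y * \<rho> y)"
    using rho_integral_finite by (intro integrableI_bounded) auto
  then have "(\<integral>\<^sup>+ y. ennreal (indicator K y * \<rho> y) \<partial>lborel) = ennreal normalizer"
    unfolding normalizer_def using rho_nonneg
    by (intro nn_integral_eq_integral) (auto split: split_indicator)
  with eq show ?thesis by simp
qed

lemma normalizer_pos: "0 < normalizer"
  using rho_integral_pos unfolding ennreal_normalizer[symmetric] by (simp add: ennreal_less_zero_iff)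

lemma sets_target[simp, measurable_cong]: "sets \<pi> = sets lborel"
  and space_target[simp]: "space \<pi> = UNIV"
  by (simp_all add: target_def)

lemma measurable_target_iff[simp]: "f \<in> borel_measurable \<pi> \<longleftrightarrow> f \<in> borel_measurable lborel"
  unfolding measurable_cong_sets[OF sets_target refl] ..

lemma sqnorm_target:
  assumes [measurable]: "h \<in> borel_measurable lborel"
  shows "sqnorm \<pi> h = rho_sqnorm h / ennreal normalizer"
proof -
  have "ennreal (indicator K x * \<rho> x / normalizer) * ennreal ((h x)\<^sup>2)
      = ennreal (\<rho> x * (h x)\<^sup>2) * indicator K x / ennreal normalizer" for x
    using rho_nonneg[of x] normalizer_pos
    by (cases "x \<in> K") (simp_all add: ennreal_mult[symmetric] divide_ennreal)
  then have "sqnorm \<pi> h = (\<integral>\<^sup>+ x. ennreal (\<rho> x * (h x)\<^sup>2) * indicator K x / ennreal normalizer \<partial>lborel)"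
    unfolding target_def normalizer_def[symmetric] by (simp add: nn_integral_density)
  also have "\<dots> = rho_sqnorm h / ennreal normalizer"
    unfolding rho_sqnorm_def by (rule nn_integral_divide) measurable
  finally show ?thesis .
qed

lemma prob_space_target: "prob_space \<pi>"
proof (rule prob_spaceI)
  have "emeasure \<pi> (space \<pi>) = sqnorm \<pi> (\<lambda>_. 1)"
    by simp
  also have "\<dots> = rho_sqnorm (\<lambda>_. 1) / ennreal normalizer"
    by (rule sqnorm_target) simp
  also have "rho_sqnorm (\<lambda>_. 1) = ennreal normalizer"
    unfolding rho_sqnorm_def ennreal_normalizer by simp
  finally show "emeasure \<pi> (space \<pi>) = 1"
    using normalizer_pos by (simp add: divide_ennreal[symmetric])
qed

lemma L2_bounds_hybrid_minus_slice:
  assumes c: "beta K \<rho> H k < c"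
  shows "c \<in> L2_bounds \<pi> (\<lambda>f x. hybrid_op \<rho> H k f x - slice_op K \<rho> f x)"
proof (rule L2_boundsI)
  show "0 \<le> c" using beta_nonneg c by (rule order_trans[OF _ less_imp_le])
  fix f assume "L2fun \<pi> f"
  then have [measurable]: "f \<in> borel_measurable lborel" by (simp add: L2fun_def)
  have "sqnorm \<pi> (\<lambda>x. hybrid_op \<rho> H k f x - slice_op K \<rho> f x)
      = rho_sqnorm (\<lambda>x. hybrid_op \<rho> H k f x - slice_op K \<rho> f x) / ennreal normalizer"
    by (rule sqnorm_target) measurable
  also have "\<dots> \<le> ennreal (c\<^sup>2) * rho_sqnorm f / ennreal normalizer"
    by (intro divide_right_mono_ennreal rho_sqnorm_hybrid_minus_slice_le c) measurable
  also have "\<dots> = ennreal (c\<^sup>2) * sqnorm \<pi> f"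
    by (simp add: sqnorm_target ennreal_times_divide)
  finally show "sqnorm \<pi> (\<lambda>x. hybrid_op \<rho> H k f x - slice_op K \<rho> f x) \<le> ennreal (c\<^sup>2) * sqnorm \<pi> f" .
qed

lemma two_in_L2_bounds_slice_op: "2 \<in> L2_bounds \<pi> (\<lambda>f x. slice_op K \<rho> f x - (\<integral>y. f y \<partial>\<pi>))"
proof (rule two_in_L2_bounds_centered[OF prob_space_imp_subprob_space[OF prob_space_target]])
  fix f assume "L2fun \<pi> f"
  then have [measurable]: "f \<in> borel_measurable lborel" by (simp add: L2fun_def)
  have "sqnorm \<pi> (slice_op K \<rho> f) = rho_sqnorm (slice_op K \<rho> f) / ennreal normalizer"
    by (rule sqnorm_target) measurable
  also have "\<dots> \<le> rho_sqnorm f / ennreal normalizer"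
    by (intro divide_right_mono_ennreal rho_sqnorm_slice_op_le) measurable
  also have "\<dots> = sqnorm \<pi> f"
    by (rule sqnorm_target[symmetric]) measurable
  finally show "slice_op K \<rho> f \<in> borel_measurable \<pi> \<and> sqnorm \<pi> (slice_op K \<rho> f) \<le> sqnorm \<pi> f"
    by simp
qed

lemma gap_hybrid_op_ge: "gap \<pi> (slice_op K \<rho>) - beta K \<rho> H k \<le> gap \<pi> (hybrid_op \<rho> H k)"
proof -
  have "(\<lambda>x. hybrid_op \<rho> H k f x - slice_op K \<rho> f x) \<in> borel_measurable \<pi>
      \<and> (\<lambda>x. slice_op K \<rho> f x - (\<integral>y. f y \<partial>\<pi>)) \<in> borel_measurable \<pi>" if "L2fun \<pi> f" for f
  proof -
    from that have [measurable]: "f \<in> borel_measurable lborel" by (simp add: L2fun_def)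
    show ?thesis unfolding measurable_target_iff by (intro conjI) measurable
  qed
  from op_norm_L2_add_le[OF L2_bounds_hybrid_minus_slice[OF less_add_one] two_in_L2_bounds_slice_op this]
  have "op_norm_L2 \<pi> (\<lambda>f x. hybrid_op \<rho> H k f x - (\<integral>y. f y \<partial>\<pi>))
      \<le> op_norm_L2 \<pi> (\<lambda>f x. hybrid_op \<rho> H k f x - slice_op K \<rho> f x)
        + op_norm_L2 \<pi> (\<lambda>f x. slice_op K \<rho> f x - (\<integral>y. f y \<partial>\<pi>))"
    by simp
  moreover have "op_norm_L2 \<pi> (\<lambda>f x. hybrid_op \<rho> H k f x - slice_op K \<rho> f x) \<le> beta K \<rho> H k"
    using L2_bounds_hybrid_minus_slice beta_nonneg by (rule op_norm_L2_le)
  ultimately show ?thesis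
    unfolding gap_def by linarith
qed

end

theorem corollary3p2:
  fixes K :: "'a::euclidean_space set" and \<rho> :: "'a \<Rightarrow> real"
    and H :: "real \<Rightarrow> 'a \<Rightarrow> 'a measure" and k :: nat
  assumes K_borel: "K \<in> sets lborel"
    and rho_meas: "\<rho> \<in> borel_measurable lborel"
    and rho_nonneg: "\<forall>x\<in>K. 0 \<le> \<rho> x"
    and int_pos: "0 < (\<integral>\<^sup>+x\<in>K. ennreal (\<rho> x) \<partial>lborel)"
    and int_fin: "(\<integral>\<^sup>+x\<in>K. ennreal (\<rho> x) \<partial>lborel) < \<infinity>"
    and level_vol: "\<forall>t. 0 < t \<and> (\<exists>x\<in>K. t < \<rho> x) \<longrightarrow>
        0 < emeasure lborel (level_set K \<rho> t) \<and> emeasure lborel (level_set K \<rho> t) < \<infinity>"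
    and H_meas: "(\<lambda>p. H (fst p) (snd p)) \<in> (borel \<Otimes>\<^sub>M lborel) \<rightarrow>\<^sub>M subprob_algebra lborel"
    and H_markov: "\<forall>t x. x \<in> level_set K \<rho> t \<longrightarrow>
        prob_space (H t x) \<and> emeasure (H t x) (level_set K \<rho> t) = 1"
    and H_zero: "\<forall>t x. x \<notin> level_set K \<rho> t \<longrightarrow> H t x = null_measure lborel"
    and H_rev: "\<forall>t A B. A \<in> sets lborel \<and> B \<in> sets lborel \<longrightarrow>
        (\<integral>\<^sup>+x\<in>A. emeasure (H t x) B \<partial>(unif_level K \<rho> t)) =
        (\<integral>\<^sup>+x\<in>B. emeasure (H t x) A \<partial>(unif_level K \<rho> t))"
    and gapU: "0 < gap (target K \<rho>) (slice_op K \<rho>)"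
    and k_pos: "1 \<le> k"
  shows "gap (target K \<rho>) (hybrid_op \<rho> H k) \<ge> gap (target K \<rho>) (slice_op K \<rho>) - beta K \<rho> H k"
proof -
  have sets_eq: "sets (borel \<Otimes>\<^sub>M lborel) = sets (lborel \<Otimes>\<^sub>M (lborel :: 'a measure))"
    by (intro sets_pair_measure_cong) simp_all
  from H_meas have H_kernel: "(\<lambda>p. H (fst p) (snd p)) \<in> lborel \<Otimes>\<^sub>M lborel \<rightarrow>\<^sub>M subprob_algebra lborel"
    unfolding measurable_cong_sets[OF sets_eq refl] .
  interpret slice_sampler K \<rho> H
    unfolding slice_sampler_def
    using K_borel rho_meas rho_nonneg int_pos int_fin H_kernel H_markov H_rev by blast
  show ?thesis
    by (rule gap_hybrid_op_ge)
qed

end
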